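(* Let $G=(V,E)$ be an atomic bispanning graph and $v\in V$ a vertex of degree $3$ with adjacent vertices $x,y,z$, joined to $v$ by the edges $e_x,e_y,e_z$ respectively. For each $(a,b)\in\{(x,y),(x,z),(y,z)\}$, the graph $G_{a,b}$ with vertex set $V-v$ and edge set $E-e_x-e_y-e_z+e_{a,b}$, where $e_{a,b}$ is a new edge with ends $a$ and $b$, is bispanning.
   Context: Graphs are finite, undirected, may have parallel edges, no loops; $X\pm a$ denotes adding/removing a single element. A spanning tree of $G$ is $T\subseteq E$ with $(V,T)$ connected and acyclic; $G$ is bispanning if $E$ is the union of two disjoint spanning trees. A bispanning graph is atomic if its only bispanning subgraphs are itself and single vertices. Equivalently $G_{a,b}$ is obtained from $G$ by contracting $e_a$ (merging $v$ into $a$) and deleting the former edge $e_c$, $c$ being the third neighbour; the paper calls $G_{x,y},G_{x,z},G_{y,z}$ the reduction graphs of $G$ at $v$. *)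

theory Defs
  imports Main
begin

text \<open>Parallel edges are
  distinct identifiers with the same ends; loops are excluded.\<close>

definition graph :: "'v set \<Rightarrow> 'e set \<Rightarrow> ('e \<Rightarrow> 'v set) \<Rightarrow> bool" where
  "graph V E ends \<longleftrightarrow> finite V \<and> finite E \<and>
     (\<forall>e\<in>E. ends e \<subseteq> V \<and> card (ends e) = 2)"

inductive reach :: "('e \<Rightarrow> 'v set) \<Rightarrow> 'e set \<Rightarrow> 'v \<Rightarrow> 'v \<Rightarrow> bool"
  for ends :: "'e \<Rightarrow> 'v set" and T :: "'e set" where
  reach_refl: "reach ends T u u"
| reach_step: "e \<in> T \<Longrightarrow> ends e = {u, w} \<Longrightarrow> reach ends T w t \<Longrightarrow> reach ends T u t"

definition connected_graph :: "'v set \<Rightarrow> 'e set \<Rightarrow> ('e \<Rightarrow> 'v set) \<Rightarrow> bool" where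
  "connected_graph V T ends \<longleftrightarrow> V \<noteq> {} \<and> (\<forall>u\<in>V. \<forall>w\<in>V. reach ends T u w)"

definition is_cycle :: "'e set \<Rightarrow> ('e \<Rightarrow> 'v set) \<Rightarrow> 'v list \<Rightarrow> 'e list \<Rightarrow> bool" where
  "is_cycle T ends vs es \<longleftrightarrow> length es \<ge> 2 \<and> length vs = length es \<and>
     distinct vs \<and> distinct es \<and> set es \<subseteq> T \<and>
     (\<forall>i<length es. ends (es ! i) = {vs ! i, vs ! ((i + 1) mod length vs)})"

definition acyclic_graph :: "'e set \<Rightarrow> ('e \<Rightarrow> 'v set) \<Rightarrow> bool" where
  "acyclic_graph T ends \<longleftrightarrow> \<not> (\<exists>vs es. is_cycle T ends vs es)"

definition spanning_tree :: "'v set \<Rightarrow> 'e set \<Rightarrow> ('e \<Rightarrow> 'v set) \<Rightarrow> 'e set \<Rightarrow> bool" where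
  "spanning_tree V E ends T \<longleftrightarrow> T \<subseteq> E \<and> connected_graph V T ends \<and> acyclic_graph T ends"

definition bispanning :: "'v set \<Rightarrow> 'e set \<Rightarrow> ('e \<Rightarrow> 'v set) \<Rightarrow> bool" where
  "bispanning V E ends \<longleftrightarrow> graph V E ends \<and>
     (\<exists>T1 T2. T1 \<inter> T2 = {} \<and> T1 \<union> T2 = E \<and>
        spanning_tree V E ends T1 \<and> spanning_tree V E ends T2)"

definition subgraph :: "'v set \<Rightarrow> 'e set \<Rightarrow> 'v set \<Rightarrow> 'e set \<Rightarrow> ('e \<Rightarrow> 'v set) \<Rightarrow> bool" where
  "subgraph V' E' V E ends \<longleftrightarrow> V' \<subseteq> V \<and> E' \<subseteq> E \<and> (\<forall>e\<in>E'. ends e \<subseteq> V')"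

definition atomic :: "'v set \<Rightarrow> 'e set \<Rightarrow> ('e \<Rightarrow> 'v set) \<Rightarrow> bool" where
  "atomic V E ends \<longleftrightarrow> bispanning V E ends \<and>
     (\<forall>V' E'. subgraph V' E' V E ends \<and> bispanning V' E' ends \<longrightarrow>
        (V' = V \<and> E' = E) \<or> (\<exists>u. V' = {u}))"

text \<open>Reduction graph G_{a,b} at v: old edges become Some e, the new edge e_{a,b} is None.\<close>
definition red_edges :: "'e set \<Rightarrow> 'e \<Rightarrow> 'e \<Rightarrow> 'e \<Rightarrow> 'e option set" where
  "red_edges E ex ey ez = Some ` (E - {ex, ey, ez}) \<union> {None}"

definition red_ends :: "('e \<Rightarrow> 'v set) \<Rightarrow> 'v \<Rightarrow> 'v \<Rightarrow> 'e option \<Rightarrow> 'v set" where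
  "red_ends ends a b o' = (case o' of None \<Rightarrow> {a, b} | Some e \<Rightarrow> ends e)"

end

theory Submission
  imports Defs
begin

text \<open>
  By the two-tree case of the Nash-Williams--Tutte theorem, a graph is bispanning exactly when
  |E| = 2|V| - 2 and every nonempty vertex set X induces at most 2|X| - 2 edges; sufficiency is
  proved by induction, deleting a vertex of degree two or splitting off a suitable pair of
  neighbours of a vertex of degree three. In an atomic graph the count is strict, 2|X| - 3,
  for every proper X with |X| \<ge> 2, since a tight X would induce a proper bispanning subgraph.
  The reduction G_{a,b} has one vertex and two edges fewer than G, and a vertex set of it gains
  at most the new edge e_{a,b}, and only if it contains both a and b, in which case the strict
  count leaves room for it. So G_{a,b} satisfies the count and is bispanning.
\<close>

section \<open>Reachability, walks and cycles\<close>

lemma reach_trans: "reach ends T u w \<Longrightarrow> reach ends T w t \<Longrightarrow> reach ends T u t"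
  by (induction rule: reach.induct) (auto intro: reach.intros)

lemma reach_edge: "e \<in> T \<Longrightarrow> ends e = {u, w} \<Longrightarrow> reach ends T u w"
  by (rule reach_step) (auto intro: reach_refl)

lemma reach_sym: "reach ends T u w \<Longrightarrow> reach ends T w u"
proof (induction rule: reach.induct)
  case (reach_refl u)
  then show ?case by (rule reach.reach_refl)
next
  case (reach_step e u w t)
  have "reach ends T w u"
    using reach_step(1,2) by (intro reach_edge[of e]) auto
  with reach_step(4) show ?case by (metis reach_trans)
qed

lemma reach_edges_reach:
  assumes "reach ends T p q"
    and "\<And>e a b. e \<in> T \<Longrightarrow> ends e = {a, b} \<Longrightarrow> reach ends' T' a b"
  shows "reach ends' T' p q"
  using assms(1)
  by (induction rule: reach.induct) (auto intro: reach_refl reach_trans assms(2))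

lemma reach_mono: "reach ends T p q \<Longrightarrow> T \<subseteq> T' \<Longrightarrow> reach ends T' p q"
  by (erule reach_edges_reach) (auto intro: reach_edge)

lemma reach_empty: "reach ends {} p q \<Longrightarrow> p = q"
  by (induction rule: reach.induct) auto

lemma reach_insert_iff:
  assumes "ends e = {u, w}"
  shows "reach ends (insert e T) p q \<longleftrightarrow>
    reach ends T p q \<or> reach ends T p u \<and> reach ends T w q \<or> reach ends T p w \<and> reach ends T u q"
    (is "?lhs \<longleftrightarrow> ?rhs")
proof
  show "?lhs \<Longrightarrow> ?rhs"
  proof (induction rule: reach.induct)
    case (reach_step f p m q)
    show ?case
    proof (cases "f = e")
      case True
      then have "p = u \<and> m = w \<or> p = w \<and> m = u"
        using reach_step(2) assms by (auto simp: doubleton_eq_iff)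
      then show ?thesis using reach_step(4) by (auto intro: reach_refl)
    next
      case False
      then have "reach ends T p m" using reach_step(1,2) by (intro reach_edge[of f]) auto
      then show ?thesis using reach_step(4) by (metis reach_trans)
    qed
  qed (auto intro: reach_refl)
next
  have uw: "reach ends (insert e T) u w" "reach ends (insert e T) w u"
    using assms by (auto intro: reach_edge[of e])
  assume ?rhs
  then show ?lhs
    using uw by (auto intro: reach_trans dest: reach_mono[of _ T _ _ "insert e T"])
qed

definition is_walk :: "('e \<Rightarrow> 'v set) \<Rightarrow> 'e set \<Rightarrow> 'v list \<Rightarrow> 'e list \<Rightarrow> bool" where
  "is_walk ends T vs es \<longleftrightarrow> length vs = Suc (length es) \<and> set es \<subseteq> T \<and>
     (\<forall>i<length es. ends (es ! i) = {vs ! i, vs ! Suc i})"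

lemma reach_imp_path:
  "reach ends T u t \<Longrightarrow> \<exists>vs es. is_walk ends T vs es \<and> hd vs = u \<and> last vs = t \<and> distinct vs"
proof (induction rule: reach.induct)
  case (reach_refl u)
  have "is_walk ends T [u] []" by (simp add: is_walk_def)
  then show ?case by fastforce
next
  case (reach_step e u w t)
  then obtain vs es where P: "is_walk ends T vs es" "hd vs = w" "last vs = t" "distinct vs"
    by blast
  have len: "length vs = Suc (length es)" using P(1) by (simp add: is_walk_def)
  show ?case
  proof (cases "u \<in> set vs")
    case True
    \<comment> \<open>shortcut the walk at the earlier visit of u\<close>
    then obtain i where i: "i < length vs" "vs ! i = u" by (auto simp: in_set_conv_nth)
    have "is_walk ends T (drop i vs) (drop i es)"
      using P(1) i unfolding is_walk_def by (auto dest: in_set_dropD)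
    moreover have "hd (drop i vs) = u" "last (drop i vs) = t"
      using i P(3) by (auto simp: hd_drop_conv_nth)
    ultimately show ?thesis using P(4) by (metis distinct_drop)
  next
    case False
    have "vs \<noteq> []" using len by auto
    then have "is_walk ends T (u # vs) (e # es)"
      using P(1,2) reach_step(1,2) unfolding is_walk_def
      by (auto simp: nth_Cons hd_conv_nth split: nat.splits)
    moreover have "last (u # vs) = t" using \<open>vs \<noteq> []\<close> P(3) by simp
    ultimately show ?thesis using False P(4) by (metis distinct.simps(2) list.sel(1))
  qed
qed

lemma walk_distinct_edges:
  assumes "is_walk ends T vs es" "distinct vs"
  shows "distinct es"
proof -
  have "es ! i \<noteq> es ! j" if ij: "i < j" "j < length es" for i j
  proof
    assume "es ! i = es ! j"
    then have "vs ! i \<in> {vs ! j, vs ! Suc j}"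
      using assms(1) ij unfolding is_walk_def by (metis insertI1 less_trans)
    moreover have "Suc j < length vs" using assms(1) ij by (simp add: is_walk_def)
    ultimately show False using ij assms(2) by (auto simp: nth_eq_iff_index_eq)
  qed
  then show ?thesis by (metis distinct_conv_nth linorder_neqE_nat)
qed

lemma reach_imp_cycle:
  assumes "e \<notin> T" "ends e = {u, w}" "u \<noteq> w" "reach ends T w u"
  shows "\<exists>vs es. is_cycle (insert e T) ends vs es"
proof -
  obtain vs es where P: "is_walk ends T vs es" "hd vs = w" "last vs = u" "distinct vs"
    using reach_imp_path[OF assms(4)] by blast
  have len: "length vs = Suc (length es)" and es: "set es \<subseteq> T"
    using P(1) by (auto simp: is_walk_def)
  have "vs \<noteq> []" using len by auto
  then have last_vs: "vs ! length es = u" and hd_vs: "vs ! 0 = w"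
    using P(2,3) len by (simp_all add: last_conv_nth hd_conv_nth)
  then have "es \<noteq> []" using assms(3) by auto
  have "is_cycle (insert e T) ends vs (es @ [e])"
    unfolding is_cycle_def
  proof (intro conjI allI impI)
    show "2 \<le> length (es @ [e])" using \<open>es \<noteq> []\<close> by (cases es) auto
    show "distinct (es @ [e])"
      using walk_distinct_edges[OF P(1,4)] es assms(1) by auto
    fix i assume i: "i < length (es @ [e])"
    show "ends ((es @ [e]) ! i) = {vs ! i, vs ! ((i + 1) mod length vs)}"
    proof (cases "i < length es")
      case True
      then show ?thesis using P(1) len by (simp add: nth_append is_walk_def)
    next
      case False
      then have "i = length es" using i by simp
      then show ?thesis using len last_vs hd_vs assms(2) by (simp add: nth_append insert_commute)
    qed
  qed (use P(4) len es in auto)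
  then show ?thesis by blast
qed

lemma cycle_edge_reach:
  assumes "is_cycle T ends vs es"
  shows "reach ends (T - {es ! 0}) (vs ! 0) (vs ! 1)" "ends (es ! 0) = {vs ! 0, vs ! 1}" "es ! 0 \<in> T"
proof -
  let ?k = "length es" and ?T = "T - {es ! 0}"
  have k: "?k \<ge> 2" "length vs = ?k" "distinct es" "set es \<subseteq> T"
    and ends_es: "\<And>i. i < ?k \<Longrightarrow> ends (es ! i) = {vs ! i, vs ! ((i + 1) mod ?k)}"
    using assms by (auto simp: is_cycle_def)
  have in_T: "es ! i \<in> ?T" if "1 \<le> i" "i < ?k" for i
  proof -
    have "es ! i \<noteq> es ! 0" using that nth_eq_iff_index_eq[OF k(3) that(2), of 0] by fastforce
    then show ?thesis using that k(4) nth_mem by blast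
  qed
  \<comment> \<open>go round the cycle the other way, from vs ! 1 through vs ! (k - 1) back to vs ! 0\<close>
  have along: "reach ends ?T (vs ! 1) (vs ! j)" if "1 \<le> j" "j < ?k" for j
    using that
  proof (induction j)
    case (Suc j)
    show ?case
    proof (cases "j = 0")
      case False
      then have "ends (es ! j) = {vs ! j, vs ! Suc j}" using ends_es[of j] Suc.prems by simp
      then have "reach ends ?T (vs ! j) (vs ! Suc j)"
        using in_T[of j] False Suc.prems by (intro reach_edge[of "es ! j"]) auto
      then show ?thesis using Suc False by (metis Suc_lessD less_one not_less reach_trans)
    qed (auto intro: reach_refl)
  qed simp
  have "Suc (?k - 1) = ?k" using k(1) by simp
  then have "ends (es ! (?k - 1)) = {vs ! (?k - 1), vs ! 0}" using ends_es[of "?k - 1"] by simp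
  then have "reach ends ?T (vs ! (?k - 1)) (vs ! 0)"
    using in_T[of "?k - 1"] k(1) by (intro reach_edge[of "es ! (?k - 1)"]) auto
  moreover have "reach ends ?T (vs ! 1) (vs ! (?k - 1))" using along[of "?k - 1"] k(1) by simp
  ultimately show "reach ends ?T (vs ! 0) (vs ! 1)" by (metis reach_sym reach_trans)
  show "ends (es ! 0) = {vs ! 0, vs ! 1}" using ends_es[of 0] k(1) by fastforce
  show "es ! 0 \<in> T" using k(1,4) nth_mem[of 0 es] by fastforce
qed

section \<open>Edge counts of forests and spanning trees\<close>

lemma graph_mono: "graph V E ends \<Longrightarrow> T \<subseteq> E \<Longrightarrow> graph V T ends"
  unfolding graph_def by (auto intro: finite_subset)

lemma graph_edge_ends:
  "graph V E ends \<Longrightarrow> e \<in> E \<Longrightarrow> \<exists>u w. ends e = {u, w} \<and> u \<noteq> w \<and> u \<in> V \<and> w \<in> V"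
  unfolding graph_def card_2_iff by blast

lemma graph_other_end:
  assumes "graph V E ends" "e \<in> E" "v \<in> ends e"
  obtains u where "ends e = {v, u}" "u \<in> V - {v}"
proof -
  obtain a b where ab: "ends e = {a, b}" "a \<noteq> b" "a \<in> V" "b \<in> V"
    using graph_edge_ends[OF assms(1,2)] by blast
  then consider "v = a" | "v = b" using assms(3) by blast
  then show ?thesis using ab that by cases (auto simp: insert_commute)
qed

lemma graph_end_in: "graph V E ends \<Longrightarrow> e \<in> E \<Longrightarrow> ends e = {v, u} \<Longrightarrow> u \<in> V - {v}"
  unfolding graph_def by (cases "u = v") auto

lemma acyclic_mono: "acyclic_graph T ends \<Longrightarrow> T' \<subseteq> T \<Longrightarrow> acyclic_graph T' ends"
  unfolding acyclic_graph_def is_cycle_def by blast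

definition component :: "('e \<Rightarrow> 'v set) \<Rightarrow> 'e set \<Rightarrow> 'v set \<Rightarrow> 'v \<Rightarrow> 'v set" where
  "component ends T X p = {q\<in>X. reach ends T p q}"

definition num_components :: "('e \<Rightarrow> 'v set) \<Rightarrow> 'e set \<Rightarrow> 'v set \<Rightarrow> nat" where
  "num_components ends T X = card (component ends T X ` X)"

lemma component_eq_iff:
  assumes "u \<in> X"
  shows "component ends T X p = component ends T X u \<longleftrightarrow> reach ends T p u"
  using assms by (auto simp: component_def intro: reach_refl reach_trans reach_sym)

lemma num_components_empty: "num_components ends {} X = card X"
proof -
  have "component ends {} X p = {p}" if "p \<in> X" for p
    using that by (auto simp: component_def intro: reach_refl dest: reach_empty)
  then have "component ends {} X ` X = (\<lambda>p. {p}) ` X" by auto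
  then show ?thesis by (simp add: num_components_def card_image)
qed

lemma num_components_insert_reach:
  assumes "ends e = {u, w}" "reach ends T u w"
  shows "num_components ends (insert e T) X = num_components ends T X"
proof -
  have "reach ends (insert e T) p q \<longleftrightarrow> reach ends T p q" for p q
    using reach_insert_iff[of ends e u w, OF assms(1)] assms(2) by (meson reach_sym reach_trans)
  then show ?thesis by (simp add: num_components_def component_def)
qed

lemma num_components_insert_bridge:
  assumes "finite X" "u \<in> X" "w \<in> X" "ends e = {u, w}" "\<not> reach ends T u w"
  shows "num_components ends T X = num_components ends (insert e T) X + 1"
proof -
  let ?c = "component ends T X" and ?c' = "component ends (insert e T) X"
  have merged: "?c' p = (if reach ends T p u \<or> reach ends T p w then ?c u \<union> ?c w else ?c p)" for p
  proof -
    have same: "reach ends T p q \<longleftrightarrow> reach ends T r q" if "reach ends T p r" for p q r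
      using that reach_sym reach_trans by metis
    show ?thesis
    proof (cases "reach ends T p u \<or> reach ends T p w")
      case True
      then have "reach ends T p q \<or> reach ends T p u \<and> reach ends T w q \<or>
          reach ends T p w \<and> reach ends T u q \<longleftrightarrow> reach ends T u q \<or> reach ends T w q" for q
        using same[of p u q] same[of p w q] same[of p u w] same[of p w u] by blast
      then show ?thesis
        using True unfolding component_def reach_insert_iff[of ends e u w, OF assms(4)] by auto
    qed (simp add: component_def reach_insert_iff[of ends e u w, OF assms(4)])
  qed
  have cu_cw: "?c u \<noteq> ?c w"
    using assms(3,5) component_eq_iff by metis
  have "?c u \<union> ?c w \<notin> ?c ` X"
  proof
    assume "?c u \<union> ?c w \<in> ?c ` X"
    then obtain r where "?c r = ?c u \<union> ?c w" by blast
    then have "u \<in> ?c r" "w \<in> ?c r" using assms(2,3) by (auto simp: component_def intro: reach_refl)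
    then show False using assms(5) by (auto simp: component_def intro: reach_trans reach_sym)
  qed
  moreover have "?c' ` X = insert (?c u \<union> ?c w) (?c ` X - {?c u, ?c w})"
  proof -
    have "?c p \<noteq> ?c u \<and> ?c p \<noteq> ?c w \<longleftrightarrow> \<not> (reach ends T p u \<or> reach ends T p w)" for p
      using component_eq_iff assms(2,3) by metis
    then show ?thesis using merged assms(2) by (auto intro: reach_refl)
  qed
  moreover have sub: "{?c u, ?c w} \<subseteq> ?c ` X" using assms(2,3) by blast
  moreover have "2 \<le> card (?c ` X)"
    using card_mono[OF finite_imageI[OF assms(1)] sub] cu_cw by simp
  ultimately show ?thesis
    using cu_cw assms(1) unfolding num_components_def by (simp add: card_Diff_subset)
qed

lemma card_le_num_components:
  "graph X T ends \<Longrightarrow> card X \<le> num_components ends T X + card T"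
proof (induction T rule: infinite_finite_induct)
  case (insert e T)
  obtain u w where uw: "ends e = {u, w}" "u \<in> X" "w \<in> X"
    using graph_edge_ends[OF insert.prems] by blast
  have "card X \<le> num_components ends T X + card T"
    using insert graph_mono by blast
  moreover have "num_components ends T X \<le> num_components ends (insert e T) X + 1"
  proof (cases "reach ends T u w")
    case True
    then show ?thesis using num_components_insert_reach[of ends e u w, OF uw(1)] by simp
  next
    case False
    moreover have "finite X" using insert.prems by (simp add: graph_def)
    ultimately show ?thesis using num_components_insert_bridge[of X u w ends e T, OF _ uw(2,3,1)] by simp
  qed
  ultimately show ?case using insert.hyps by simp
qed (auto simp: graph_def num_components_empty)

lemma acyclic_card_eq:
  "graph X T ends \<Longrightarrow> acyclic_graph T ends \<Longrightarrow> card X = num_components ends T X + card T"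
proof (induction T rule: infinite_finite_induct)
  case (insert e T)
  obtain u w where uw: "ends e = {u, w}" "u \<noteq> w" "u \<in> X" "w \<in> X"
    using graph_edge_ends[OF insert.prems(1)] by blast
  have "card X = num_components ends T X + card T"
    using insert graph_mono acyclic_mono by blast
  moreover have "\<not> reach ends T u w"
    using reach_imp_cycle[of e T ends u w, OF insert.hyps(2) uw(1,2)] insert.prems(2) reach_sym
    by (fastforce simp: acyclic_graph_def)
  moreover have "finite X" using insert.prems by (simp add: graph_def)
  ultimately show ?case
    using insert.hyps num_components_insert_bridge[of X u w ends e T, OF _ uw(3,4,1)] by simp
qed (auto simp: graph_def num_components_empty)

lemma connected_card_le:
  assumes "graph X T ends" "connected_graph X T ends"
  shows "card X \<le> card T + 1"
proof -
  have "component ends T X p = X" if "p \<in> X" for p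
    using assms(2) that unfolding connected_graph_def component_def by auto
  moreover have "X \<noteq> {}" using assms(2) by (simp add: connected_graph_def)
  ultimately have "component ends T X ` X = {X}" by auto
  then show ?thesis
    using card_le_num_components[OF assms(1)] by (simp add: num_components_def)
qed

lemma acyclic_card_le:
  assumes "graph X T ends" "acyclic_graph T ends" "X \<noteq> {}"
  shows "card T + 1 \<le> card X"
proof -
  have "finite X" using assms(1) by (simp add: graph_def)
  then have "1 \<le> num_components ends T X"
    using assms(3) by (simp add: num_components_def Suc_le_eq card_gt_0_iff)
  then show ?thesis using acyclic_card_eq[OF assms(1,2)] by simp
qed

lemma connected_Diff_cycle_edge:
  assumes cycle: "is_cycle T ends vs es" and conn: "connected_graph V T ends"
  shows "connected_graph V (T - {es ! 0}) ends"
proof -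
  let ?f = "es ! 0"
  have "reach ends (T - {?f}) p q" if "reach ends T p q" for p q
    using that
  proof (rule reach_edges_reach)
    fix f a b assume f: "f \<in> T" "ends f = {a, b}"
    show "reach ends (T - {?f}) a b"
    proof (cases "f = ?f")
      case True
      then have "a = vs ! 0 \<and> b = vs ! 1 \<or> a = vs ! 1 \<and> b = vs ! 0"
        using f(2) cycle_edge_reach(2)[OF cycle] by (auto simp: doubleton_eq_iff)
      then show ?thesis using cycle_edge_reach(1)[OF cycle] reach_sym by metis
    next
      case False
      then show ?thesis using f by (intro reach_edge[of f]) auto
    qed
  qed
  then show ?thesis using conn by (simp add: connected_graph_def)
qed

lemma connected_card_imp_acyclic:
  assumes g: "graph V T ends" and conn: "connected_graph V T ends" and card: "card T + 1 = card V"
  shows "acyclic_graph T ends"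
  unfolding acyclic_graph_def
proof
  assume "\<exists>vs es. is_cycle T ends vs es"
  then obtain vs es where cycle: "is_cycle T ends vs es" by blast
  have "card V \<le> card (T - {es ! 0}) + 1"
    using connected_card_le[OF graph_mono[OF g] connected_Diff_cycle_edge[OF cycle conn]] by blast
  moreover have "finite T" using g by (simp add: graph_def)
  then have "card (T - {es ! 0}) + 1 = card T"
    using card.remove[OF _ cycle_edge_reach(3)[OF cycle]] by simp
  ultimately show False using card by linarith
qed

lemma spanning_tree_iff_card:
  assumes "graph V T ends" "T \<subseteq> E"
  shows "spanning_tree V E ends T \<longleftrightarrow> connected_graph V T ends \<and> card T + 1 = card V"
proof
  assume "spanning_tree V E ends T"
  then have conn: "connected_graph V T ends" and acyc: "acyclic_graph T ends"
    by (simp_all add: spanning_tree_def)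
  moreover have "V \<noteq> {}" using conn by (simp add: connected_graph_def)
  ultimately show "connected_graph V T ends \<and> card T + 1 = card V"
    using connected_card_le[OF assms(1) conn] acyclic_card_le[OF assms(1) acyc] by simp
next
  assume "connected_graph V T ends \<and> card T + 1 = card V"
  then show "spanning_tree V E ends T"
    using connected_card_imp_acyclic[OF assms(1)] assms(2) by (simp add: spanning_tree_def)
qed

section \<open>Sparsity\<close>

definition induced_edges :: "'e set \<Rightarrow> ('e \<Rightarrow> 'v set) \<Rightarrow> 'v set \<Rightarrow> 'e set" where
  "induced_edges E ends X = {e\<in>E. ends e \<subseteq> X}"

definition sparse :: "'v set \<Rightarrow> 'e set \<Rightarrow> ('e \<Rightarrow> 'v set) \<Rightarrow> bool" where
  "sparse V E ends \<longleftrightarrow> (\<forall>X\<subseteq>V. X \<noteq> {} \<longrightarrow> card (induced_edges E ends X) + 2 \<le> 2 * card X)"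

lemma sparseD: "sparse V E ends \<Longrightarrow> X \<subseteq> V \<Longrightarrow> X \<noteq> {} \<Longrightarrow> card (induced_edges E ends X) + 2 \<le> 2 * card X"
  by (simp add: sparse_def)

lemma sparse_subgraph:
  assumes "sparse V E ends" "finite E" "V' \<subseteq> V" "E' \<subseteq> E"
  shows "sparse V' E' ends"
  unfolding sparse_def
proof (intro allI impI)
  fix X assume "X \<subseteq> V'" "X \<noteq> {}"
  then have "card (induced_edges E ends X) + 2 \<le> 2 * card X"
    using sparseD[OF assms(1)] assms(3) by blast
  moreover have "card (induced_edges E' ends X) \<le> card (induced_edges E ends X)"
    using assms(2,4) by (intro card_mono) (auto simp: induced_edges_def)
  ultimately show "card (induced_edges E' ends X) + 2 \<le> 2 * card X" by linarith
qed

lemma induced_edges_singleton: "graph V E ends \<Longrightarrow> induced_edges E ends {u} = {}"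
  unfolding graph_def induced_edges_def by (auto dest!: subset_singletonD)

lemma bispanning_card:
  assumes "bispanning V E ends"
  shows "card E + 2 = 2 * card V"
proof -
  obtain T1 T2 where T: "T1 \<inter> T2 = {}" "T1 \<union> T2 = E"
    "spanning_tree V E ends T1" "spanning_tree V E ends T2" and g: "graph V E ends"
    using assms by (auto simp: bispanning_def)
  have "graph V T1 ends" "graph V T2 ends" using g T(2) graph_mono by blast+
  then have "card T1 + 1 = card V" "card T2 + 1 = card V" "finite T1" "finite T2"
    using spanning_tree_iff_card[of V T1 ends E] spanning_tree_iff_card[of V T2 ends E] T
    by (auto simp: graph_def)
  then show ?thesis using T(1,2) card_Un_disjoint[of T1 T2] by simp
qed

lemma bispanning_sparse:
  assumes "bispanning V E ends"
  shows "sparse V E ends"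
  unfolding sparse_def
proof (intro allI impI)
  fix X assume X: "X \<subseteq> V" "X \<noteq> {}"
  obtain T1 T2 where T: "T1 \<union> T2 = E" "spanning_tree V E ends T1" "spanning_tree V E ends T2"
    and g: "graph V E ends" using assms by (auto simp: bispanning_def)
  let ?S = "induced_edges E ends X"
  \<comment> \<open>each tree induces a forest on X\<close>
  have forest: "card (T \<inter> ?S) + 1 \<le> card X" if "spanning_tree V E ends T" for T
  proof (rule acyclic_card_le)
    show "acyclic_graph (T \<inter> ?S) ends"
      using that acyclic_mono[of T ends] by (auto simp: spanning_tree_def)
    show "graph X (T \<inter> ?S) ends"
      using g X finite_subset unfolding graph_def induced_edges_def by fastforce
  qed fact
  have "?S = T1 \<inter> ?S \<union> T2 \<inter> ?S" using T(1) by (auto simp: induced_edges_def)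
  then have "card ?S \<le> card (T1 \<inter> ?S) + card (T2 \<inter> ?S)"
    by (metis card_Un_le)
  then show "card ?S + 2 \<le> 2 * card X" using forest[OF T(2)] forest[OF T(3)] by linarith
qed

lemma tight_Un:
  assumes sp: "sparse V E ends" and fin: "finite V" "finite E"
    and XY: "X \<subseteq> V" "Y \<subseteq> V" "X \<inter> Y \<noteq> {}"
    and tX: "card (induced_edges E ends X) + 2 = 2 * card X"
    and tY: "card (induced_edges E ends Y) + 2 = 2 * card Y"
  shows "card (induced_edges E ends (X \<union> Y)) + 2 = 2 * card (X \<union> Y)"
proof -
  let ?S = "induced_edges E ends"
  have f: "finite (?S X)" "finite (?S Y)" "finite (?S (X \<union> Y))"
    using fin by (auto simp: induced_edges_def)
  have "?S X \<inter> ?S Y = ?S (X \<inter> Y)" "?S X \<union> ?S Y \<subseteq> ?S (X \<union> Y)"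
    by (auto simp: induced_edges_def)
  then have "card (?S X) + card (?S Y) \<le> card (?S (X \<union> Y)) + card (?S (X \<inter> Y))"
    using card_Un_Int[OF f(1,2)] card_mono[OF f(3)] by simp
  moreover have "card (X \<union> Y) + card (X \<inter> Y) = card X + card Y"
    using card_Un_Int[of X Y] XY fin finite_subset[of _ V] by simp
  moreover have "card (?S (X \<inter> Y)) + 2 \<le> 2 * card (X \<inter> Y)"
    by (rule sparseD[OF sp]) (use XY in auto)
  moreover have "card (?S (X \<union> Y)) + 2 \<le> 2 * card (X \<union> Y)"
    by (rule sparseD[OF sp]) (use XY in auto)
  ultimately show ?thesis using tX tY by linarith
qed

section \<open>Sparse tight graphs are bispanning\<close>

definition degree :: "'e set \<Rightarrow> ('e \<Rightarrow> 'v set) \<Rightarrow> 'v \<Rightarrow> nat" where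
  "degree E ends v = card {e\<in>E. v \<in> ends e}"

lemma degree_add_induced_edges:
  assumes "graph V E ends"
  shows "degree E ends v + card (induced_edges E ends (V - {v})) = card E"
proof -
  have "induced_edges E ends (V - {v}) = {e\<in>E. v \<notin> ends e}"
    using assms by (auto simp: graph_def induced_edges_def)
  moreover have "finite E" using assms by (simp add: graph_def)
  moreover have "{e\<in>E. v \<in> ends e} \<union> {e\<in>E. v \<notin> ends e} = E" by blast
  ultimately show ?thesis
    unfolding degree_def by (metis (no_types, lifting) card_Un_disjoint disjoint_iff
        finite_Un mem_Collect_eq)
qed

lemma sum_degree:
  assumes "graph V E ends"
  shows "(\<Sum>v\<in>V. degree E ends v) = 2 * card E"
proof -
  have fin: "finite V" "finite E" using assms by (auto simp: graph_def)
  have "(\<Sum>v\<in>V. degree E ends v) = (\<Sum>v\<in>V. \<Sum>e\<in>E. if v \<in> ends e then 1 else 0)"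
    using fin by (simp add: degree_def sum.inter_filter[symmetric])
  also have "\<dots> = (\<Sum>e\<in>E. \<Sum>v\<in>V. if v \<in> ends e then 1 else 0)"
    by (rule sum.swap)
  also have "\<dots> = (\<Sum>e\<in>E. 2)"
  proof (rule sum.cong[OF refl])
    fix e assume "e \<in> E"
    then have "{v\<in>V. v \<in> ends e} = ends e" "card (ends e) = 2"
      using assms by (auto simp: graph_def)
    then show "(\<Sum>v\<in>V. if v \<in> ends e then 1 else 0) = (2::nat)"
      using fin by (simp add: sum.inter_filter[symmetric])
  qed
  finally show ?thesis by simp
qed

lemma exists_degree_le_3:
  assumes "graph V E ends" "card E + 2 = 2 * card V"
  shows "\<exists>v\<in>V. degree E ends v \<le> 3"
proof (rule ccontr)
  assume "\<not> ?thesis"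
  then have "card V * 4 \<le> (\<Sum>v\<in>V. degree E ends v)"
    using sum_bounded_below[of V 4 "degree E ends"] by fastforce
  then show False using sum_degree[OF assms(1)] assms(2) by linarith
qed

lemma connected_insert_vertex:
  assumes "connected_graph V' T' ends'"
    and "\<And>p q. reach ends' T' p q \<Longrightarrow> reach ends T p q"
    and "u \<in> V'" "reach ends T v u"
  shows "connected_graph (insert v V') T ends"
  unfolding connected_graph_def
proof (intro conjI ballI)
  have old: "reach ends T p q" if "p \<in> V'" "q \<in> V'" for p q
    using assms(1,2) that by (simp add: connected_graph_def)
  fix p q assume "p \<in> insert v V'" "q \<in> insert v V'"
  then show "reach ends T p q"
    using old[of p u] old[of u q] assms(3,4) reach_sym[OF assms(4)]
    by (auto intro: reach_refl reach_trans old)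
qed simp

lemma spanning_tree_add_pendant_edge:
  assumes g: "graph V E ends" and v: "v \<in> V"
    and tree: "spanning_tree (V - {v}) E' ends' T" "graph (V - {v}) T ends'"
    and e: "insert e T \<subseteq> E" "e \<notin> T" "ends e = {v, u}"
    and lift: "\<And>p q. reach ends' T p q \<Longrightarrow> reach ends (insert e T) p q"
  shows "spanning_tree V E ends (insert e T)"
proof -
  have "T \<subseteq> E'" using tree(1) by (simp add: spanning_tree_def)
  then have conn: "connected_graph (V - {v}) T ends'" and card: "card T + 1 = card (V - {v})"
    using spanning_tree_iff_card[OF tree(2)] tree(1) by blast+
  have u: "u \<in> V - {v}" using graph_end_in[OF g _ e(3)] e(1) by blast
  have "reach ends (insert e T) v u" using e(3) by (intro reach_edge) auto
  with connected_insert_vertex[OF conn _ u] lift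
  have "connected_graph (insert v (V - {v})) (insert e T) ends" by blast
  moreover have "insert v (V - {v}) = V" using v by blast
  moreover have "card (insert e T) + 1 = card V"
    using card e(2) card_Suc_Diff1[OF _ v] tree(2) g by (simp add: graph_def)
  ultimately show ?thesis
    using spanning_tree_iff_card[OF graph_mono[OF g e(1)] e(1)] by simp
qed

lemma bispanning_singleton:
  assumes "graph {r} E ends" "E = {}"
  shows "bispanning {r} E ends"
proof -
  have "spanning_tree {r} E ends {}"
    using assms by (simp add: spanning_tree_iff_card graph_def connected_graph_def reach_refl)
  then show ?thesis using assms(1,2) by (auto simp: bispanning_def)
qed

lemma degree_ge_2:
  assumes "graph V E ends" "card E + 2 = 2 * card V" "sparse V E ends" "v \<in> V" "2 \<le> card V"
  shows "2 \<le> degree E ends v"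
proof -
  have "finite V" using assms(1) by (simp add: graph_def)
  then have card: "card (V - {v}) + 1 = card V" using card_Suc_Diff1[OF _ assms(4)] by simp
  then have "V - {v} \<noteq> {}" using assms(5) by force
  then have "card (induced_edges E ends (V - {v})) + 2 \<le> 2 * card (V - {v})"
    by (intro sparseD[OF assms(3)]) auto
  then show ?thesis using card degree_add_induced_edges[OF assms(1), of v] assms(2) by linarith
qed

lemma deg2_reduction_counts:
  assumes g: "graph V E ends" and t: "card E + 2 = 2 * card V" and sp: "sparse V E ends"
    and v: "v \<in> V" and I: "{e\<in>E. v \<in> ends e} = {e1, e2}" "e1 \<noteq> e2"
  shows "graph (V - {v}) (E - {e1, e2}) ends"
    and "card (E - {e1, e2}) + 2 = 2 * card (V - {v})"
    and "sparse (V - {v}) (E - {e1, e2}) ends"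
proof -
  have fin: "finite V" "finite E" using g by (auto simp: graph_def)
  show "graph (V - {v}) (E - {e1, e2}) ends"
    using g I(1) unfolding graph_def by blast
  have "{e1, e2} \<subseteq> E" using I(1) by blast
  then have "card (E - {e1, e2}) + 2 = card E"
    using I(2) fin card_mono[OF fin(2), of "{e1, e2}"] by (simp add: card_Diff_subset)
  then show "card (E - {e1, e2}) + 2 = 2 * card (V - {v})"
    using t card_Suc_Diff1[OF fin(1) v] by simp
  show "sparse (V - {v}) (E - {e1, e2}) ends"
    by (rule sparse_subgraph[OF sp fin(2)]) auto
qed

lemma bispanning_deg2_lift:
  assumes g: "graph V E ends" and v: "v \<in> V"
    and I: "{e\<in>E. v \<in> ends e} = {e1, e2}" "e1 \<noteq> e2"
    and red: "bispanning (V - {v}) (E - {e1, e2}) ends"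
  shows "bispanning V E ends"
proof -
  let ?V' = "V - {v}" and ?E' = "E - {e1, e2}"
  obtain T1 T2 where T: "T1 \<inter> T2 = {}" "T1 \<union> T2 = ?E'"
    "spanning_tree ?V' ?E' ends T1" "spanning_tree ?V' ?E' ends T2"
    and g': "graph ?V' ?E' ends" using red by (auto simp: bispanning_def)
  have inc: "e \<in> E" "v \<in> ends e" if "e \<in> {e1, e2}" for e
    using that I(1) by auto
  have extend: "spanning_tree V E ends (insert e T)"
    if tree: "spanning_tree ?V' ?E' ends T" "T \<subseteq> ?E'" and e: "e \<in> {e1, e2}" for T e
  proof -
    obtain u where u: "ends e = {v, u}" using graph_other_end[OF g inc[OF e]] .
    show ?thesis
    proof (rule spanning_tree_add_pendant_edge[OF g v tree(1) graph_mono[OF g' tree(2)] _ _ u])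
      show "insert e T \<subseteq> E" "e \<notin> T" using tree(2) e inc[OF e] by auto
      show "reach ends (insert e T) p q" if "reach ends T p q" for p q
        using that by (rule reach_mono) blast
    qed
  qed
  have "spanning_tree V E ends (insert e1 T1)" "spanning_tree V E ends (insert e2 T2)"
    using extend[OF T(3)] extend[OF T(4)] T(2) by blast+
  moreover have "insert e1 T1 \<inter> insert e2 T2 = {}" "insert e1 T1 \<union> insert e2 T2 = E"
    using T(1,2) I(2) inc[of e1] inc[of e2] by blast+
  ultimately show ?thesis using g unfolding bispanning_def by blast
qed

definition admissible_pair :: "'v set \<Rightarrow> 'e set \<Rightarrow> ('e \<Rightarrow> 'v set) \<Rightarrow> 'v \<Rightarrow> 'v \<Rightarrow> 'v \<Rightarrow> bool" where
  "admissible_pair V E ends v a b \<longleftrightarrow> a \<noteq> b \<and>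
     (\<forall>Y\<subseteq>V - {v}. a \<in> Y \<longrightarrow> b \<in> Y \<longrightarrow> card (induced_edges E ends Y) + 3 \<le> 2 * card Y)"

lemma graph_split_off:
  assumes "graph V E ends" "a \<in> V - {v}" "b \<in> V - {v}" "a \<noteq> b" "finite E'"
    and "\<And>e. e \<in> E' \<Longrightarrow> ends' e = {a, b} \<or> (\<exists>f\<in>E. v \<notin> ends f \<and> ends' e = ends f)"
  shows "graph (V - {v}) E' ends'"
  using assms unfolding graph_def by fastforce

lemma sparse_split_off:
  assumes "sparse V E ends" "admissible_pair V E ends v a b"
    and "\<And>Y. Y \<subseteq> V - {v} \<Longrightarrow>
      card (induced_edges E' ends' Y) \<le> card (induced_edges E ends Y) + (if a \<in> Y \<and> b \<in> Y then 1 else 0)"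
  shows "sparse (V - {v}) E' ends'"
  unfolding sparse_def
proof (intro allI impI)
  fix Y assume Y: "Y \<subseteq> V - {v}" "Y \<noteq> {}"
  have "card (induced_edges E ends Y) + 2 \<le> 2 * card Y"
    by (rule sparseD[OF assms(1)]) (use Y in auto)
  moreover have "card (induced_edges E ends Y) + 3 \<le> 2 * card Y" if "a \<in> Y" "b \<in> Y"
    using assms(2) Y(1) that unfolding admissible_pair_def by blast
  ultimately show "card (induced_edges E' ends' Y) + 2 \<le> 2 * card Y"
    using assms(3)[OF Y(1)] by (cases "a \<in> Y \<and> b \<in> Y") auto
qed

lemma deg3_reduction_counts:
  assumes g: "graph V E ends" and t: "card E + 2 = 2 * card V" and sp: "sparse V E ends"
    and v: "v \<in> V" and I: "{e\<in>E. v \<in> ends e} = {e1, e2, e3}" "e1 \<noteq> e2" "e1 \<noteq> e3" "e2 \<noteq> e3"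
    and u: "ends e1 = {v, u1}" "ends e2 = {v, u2}"
    and adm: "admissible_pair V E ends v u1 u2"
  shows "graph (V - {v}) (E - {e2, e3}) (ends(e1 := {u1, u2}))"
    and "card (E - {e2, e3}) + 2 = 2 * card (V - {v})"
    and "sparse (V - {v}) (E - {e2, e3}) (ends(e1 := {u1, u2}))"
proof -
  have fin: "finite V" "finite E" using g by (auto simp: graph_def)
  have e: "e1 \<in> E" "e2 \<in> E" "e3 \<in> E" using I(1) by blast+
  have uV: "u1 \<in> V - {v}" "u2 \<in> V - {v}"
    using graph_end_in[OF g e(1) u(1)] graph_end_in[OF g e(2) u(2)] .
  show "graph (V - {v}) (E - {e2, e3}) (ends(e1 := {u1, u2}))"
  proof (rule graph_split_off[OF g uV])
    show "u1 \<noteq> u2" using adm by (simp add: admissible_pair_def)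
    fix e assume "e \<in> E - {e2, e3}"
    then have "e = e1 \<or> e \<in> E \<and> v \<notin> ends e" using I(1) by blast
    then show "(ends(e1 := {u1, u2})) e = {u1, u2} \<or>
        (\<exists>f\<in>E. v \<notin> ends f \<and> (ends(e1 := {u1, u2})) e = ends f)"
      by auto
  qed (use fin in simp)
  have "card (E - {e2, e3}) + 2 = card E"
    using I(4) e(2,3) fin card_mono[OF fin(2), of "{e2, e3}"] by (simp add: card_Diff_subset)
  then show "card (E - {e2, e3}) + 2 = 2 * card (V - {v})"
    using t card_Suc_Diff1[OF fin(1) v] by simp
  show "sparse (V - {v}) (E - {e2, e3}) (ends(e1 := {u1, u2}))"
  proof (rule sparse_split_off[OF sp adm])
    fix Y assume Y: "Y \<subseteq> V - {v}"
    let ?S = "induced_edges E ends Y"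
    \<comment> \<open>the old e1 is not induced by Y since it is incident to v\<close>
    have sub: "induced_edges (E - {e2, e3}) (ends(e1 := {u1, u2})) Y
        \<subseteq> ?S \<union> (if u1 \<in> Y \<and> u2 \<in> Y then {e1} else {})"
      using Y by (auto simp: induced_edges_def)
    have "finite ?S" using fin by (simp add: induced_edges_def)
    then have "card (induced_edges (E - {e2, e3}) (ends(e1 := {u1, u2})) Y)
        \<le> card (?S \<union> (if u1 \<in> Y \<and> u2 \<in> Y then {e1} else {}))"
      by (intro card_mono[OF _ sub]) simp
    also have "\<dots> \<le> card ?S + (if u1 \<in> Y \<and> u2 \<in> Y then 1 else 0)"
      using \<open>finite ?S\<close> by (simp add: card_insert_if)
    finally show "card (induced_edges (E - {e2, e3}) (ends(e1 := {u1, u2})) Y)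
        \<le> card ?S + (if u1 \<in> Y \<and> u2 \<in> Y then 1 else 0)" .
  qed
qed

lemma bispanning_deg3_lift:
  assumes g: "graph V E ends" and v: "v \<in> V"
    and I: "{e\<in>E. v \<in> ends e} = {e1, e2, e3}" "e1 \<noteq> e2" "e1 \<noteq> e3" "e2 \<noteq> e3"
    and u: "ends e1 = {v, u1}" "ends e2 = {v, u2}" "ends e3 = {v, u3}"
    and red: "bispanning (V - {v}) (E - {e2, e3}) (ends(e1 := {u1, u2}))"
  shows "bispanning V E ends"
proof -
  let ?V' = "V - {v}" and ?E' = "E - {e2, e3}" and ?ends' = "ends(e1 := {u1, u2})"
  obtain T1 T2 where T: "T1 \<inter> T2 = {}" "T1 \<union> T2 = ?E'"
    "spanning_tree ?V' ?E' ?ends' T1" "spanning_tree ?V' ?E' ?ends' T2"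
    and g': "graph ?V' ?E' ?ends'" using red by (auto simp: bispanning_def)
  have inc: "e1 \<in> E" "e2 \<in> E" "e3 \<in> E" using I(1) by auto
  have extend: "spanning_tree V E ends (insert e T)"
    if tree: "spanning_tree ?V' ?E' ?ends' T" "T \<subseteq> ?E'"
      and e: "e \<in> {e2, e3}" "ends e = {v, w}"
      and lift: "\<And>p q. reach ?ends' T p q \<Longrightarrow> reach ends (insert e T) p q" for T e w
  proof (rule spanning_tree_add_pendant_edge[OF g v tree(1) graph_mono[OF g' tree(2)] _ _ e(2) lift])
    show "insert e T \<subseteq> E" "e \<notin> T" using tree(2) e(1) inc by auto
  qed
  \<comment> \<open>the tree containing the split-off edge e1 gets e2, the other one gets e3\<close>
  have lift_e1: "reach ends (insert e2 T) p q"
    if "reach ?ends' T p q" "e1 \<in> T" for T p q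
    using that(1)
  proof (rule reach_edges_reach)
    fix f a b assume f: "f \<in> T" "?ends' f = {a, b}"
    have "reach ends (insert e2 T) u1 v" "reach ends (insert e2 T) v u2"
      using u(1,2) that(2) by (auto intro: reach_edge[of e1] reach_edge[of e2])
    then have "reach ends (insert e2 T) u1 u2" "reach ends (insert e2 T) u2 u1"
      by (auto intro: reach_trans reach_sym)
    then show "reach ends (insert e2 T) a b"
      using f by (cases "f = e1") (auto simp: doubleton_eq_iff intro: reach_edge)
  qed
  have lift_other: "reach ends (insert e3 T) p q"
    if "reach ?ends' T p q" "e1 \<notin> T" for T p q
    using that(1)
  proof (rule reach_edges_reach)
    fix f a b assume "f \<in> T" "?ends' f = {a, b}"
    then show "reach ends (insert e3 T) a b"
      using that(2) by (intro reach_edge[of f]) (auto split: if_splits)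
  qed
  have from_trees: "bispanning V E ends"
    if "A \<inter> B = {}" "A \<union> B = ?E'" "spanning_tree ?V' ?E' ?ends' A" "spanning_tree ?V' ?E' ?ends' B"
      "e1 \<in> A" for A B
  proof -
    have "spanning_tree V E ends (insert e2 A)" "spanning_tree V E ends (insert e3 B)"
      using extend[OF that(3) _ _ u(2) lift_e1] extend[OF that(4) _ _ u(3) lift_other] that
      by blast+
    moreover have "insert e2 A \<inter> insert e3 B = {}" "insert e2 A \<union> insert e3 B = E"
      using that(1,2) I(4) inc by blast+
    ultimately show ?thesis using g unfolding bispanning_def by blast
  qed
  have "e1 \<in> T1 \<or> e1 \<in> T2" using T(2) inc I(2,3) by blast
  then show ?thesis
    using from_trees[OF T(1-4)] from_trees[of T2 T1] T by (auto simp: Int_commute Un_commute)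
qed

lemma not_admissible_tight:
  assumes g: "graph V E ends" and sp: "sparse V E ends"
    and u: "u \<in> V - {v}" "u' \<in> V - {v}" and not_adm: "\<not> admissible_pair V E ends v u u'"
  obtains Y where "Y \<subseteq> V - {v}" "u \<in> Y" "u' \<in> Y" "card (induced_edges E ends Y) + 2 = 2 * card Y"
proof (cases "u = u'")
  case True
  then show ?thesis using that[of "{u}"] u induced_edges_singleton[OF g] by simp
next
  case False
  then obtain Y where Y: "Y \<subseteq> V - {v}" "u \<in> Y" "u' \<in> Y"
    "\<not> card (induced_edges E ends Y) + 3 \<le> 2 * card Y"
    using not_adm unfolding admissible_pair_def by blast
  moreover have "card (induced_edges E ends Y) + 2 \<le> 2 * card Y"
    by (rule sparseD[OF sp]) (use Y in auto)
  ultimately show ?thesis using that by simp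
qed

lemma sparse_slack_at_neighbours:
  assumes g: "graph V E ends" and sp: "sparse V E ends" and v: "v \<in> V"
    and e: "e1 \<in> E" "e2 \<in> E" "e3 \<in> E" "e1 \<noteq> e2" "e1 \<noteq> e3" "e2 \<noteq> e3"
    and u: "ends e1 = {v, u1}" "ends e2 = {v, u2}" "ends e3 = {v, u3}"
    and Z: "Z \<subseteq> V - {v}" "u1 \<in> Z" "u2 \<in> Z" "u3 \<in> Z"
  shows "card (induced_edges E ends Z) + 3 \<le> 2 * card Z"
proof -
  have fin: "finite V" "finite E" using g by (auto simp: graph_def)
  have fin_induced: "finite (induced_edges E ends X)" for X
    using fin by (simp add: induced_edges_def)
  \<comment> \<open>adding v to Z adds the three edges at v\<close>
  have sub: "induced_edges E ends Z \<union> {e1, e2, e3} \<subseteq> induced_edges E ends (insert v Z)"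
    and disj: "induced_edges E ends Z \<inter> {e1, e2, e3} = {}"
    using u e Z by (auto simp: induced_edges_def)
  have "card (induced_edges E ends Z) + 3 = card (induced_edges E ends Z \<union> {e1, e2, e3})"
    using card_Un_disjoint[OF fin_induced _ disj] e(4-6) by simp
  also have "\<dots> \<le> card (induced_edges E ends (insert v Z))"
    by (rule card_mono[OF fin_induced sub])
  finally have "card (induced_edges E ends Z) + 3 \<le> card (induced_edges E ends (insert v Z))" .
  moreover have "card (induced_edges E ends (insert v Z)) + 2 \<le> 2 * card (insert v Z)"
    by (rule sparseD[OF sp]) (use Z v in auto)
  moreover have "card (insert v Z) = card Z + 1"
  proof -
    have "finite Z" by (rule finite_subset[OF _ fin(1)]) (use Z in blast)
    moreover have "v \<notin> Z" using Z by blast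
    ultimately show ?thesis by simp
  qed
  ultimately show ?thesis by linarith
qed

lemma exists_admissible_pair:
  assumes g: "graph V E ends" and sp: "sparse V E ends" and v: "v \<in> V"
    and e: "e1 \<in> E" "e2 \<in> E" "e3 \<in> E" "e1 \<noteq> e2" "e1 \<noteq> e3" "e2 \<noteq> e3"
    and u: "ends e1 = {v, u1}" "ends e2 = {v, u2}" "ends e3 = {v, u3}"
  shows "admissible_pair V E ends v u1 u2 \<or> admissible_pair V E ends v u1 u3 \<or>
    admissible_pair V E ends v u2 u3"
proof (rule ccontr)
  assume none: "\<not> ?thesis"
  have fin: "finite V" "finite E" using g by (auto simp: graph_def)
  have uV: "u1 \<in> V - {v}" "u2 \<in> V - {v}" "u3 \<in> V - {v}"
    using graph_end_in[OF g e(1) u(1)] graph_end_in[OF g e(2) u(2)] graph_end_in[OF g e(3) u(3)] .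
  obtain Y12 where Y12: "Y12 \<subseteq> V - {v}" "u1 \<in> Y12" "u2 \<in> Y12"
      "card (induced_edges E ends Y12) + 2 = 2 * card Y12"
    using not_admissible_tight[OF g sp uV(1,2)] none by blast
  obtain Y13 where Y13: "Y13 \<subseteq> V - {v}" "u1 \<in> Y13" "u3 \<in> Y13"
      "card (induced_edges E ends Y13) + 2 = 2 * card Y13"
    using not_admissible_tight[OF g sp uV(1,3)] none by blast
  obtain Y23 where Y23: "Y23 \<subseteq> V - {v}" "u2 \<in> Y23" "u3 \<in> Y23"
      "card (induced_edges E ends Y23) + 2 = 2 * card Y23"
    using not_admissible_tight[OF g sp uV(2,3)] none by blast
  let ?Z = "Y12 \<union> Y13 \<union> Y23"
  have "card (induced_edges E ends (Y12 \<union> Y13)) + 2 = 2 * card (Y12 \<union> Y13)"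
    using Y12 Y13 by (intro tight_Un[OF sp fin]) auto
  then have "card (induced_edges E ends ?Z) + 2 = 2 * card ?Z"
    using Y12 Y13 Y23 by (intro tight_Un[OF sp fin]) auto
  moreover have "card (induced_edges E ends ?Z) + 3 \<le> 2 * card ?Z"
    using Y12 Y13 Y23 by (intro sparse_slack_at_neighbours[OF g sp v e u]) auto
  ultimately show False by linarith
qed

lemma obtain_admissible_labelling:
  assumes g: "graph V E ends" and sp: "sparse V E ends" and v: "v \<in> V"
    and deg: "degree E ends v = 3"
  obtains e1 e2 e3 u1 u2 u3
  where "{e\<in>E. v \<in> ends e} = {e1, e2, e3}" "e1 \<noteq> e2" "e1 \<noteq> e3" "e2 \<noteq> e3"
    and "ends e1 = {v, u1}" "ends e2 = {v, u2}" "ends e3 = {v, u3}"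
    and "admissible_pair V E ends v u1 u2"
proof -
  obtain e1 e2 e3 where I: "{e\<in>E. v \<in> ends e} = {e1, e2, e3}" "e1 \<noteq> e2" "e1 \<noteq> e3" "e2 \<noteq> e3"
    using deg unfolding degree_def card_3_iff by blast
  have inc: "e1 \<in> E" "v \<in> ends e1" "e2 \<in> E" "v \<in> ends e2" "e3 \<in> E" "v \<in> ends e3"
    using I(1) by blast+
  obtain u1 where u1: "ends e1 = {v, u1}" using graph_other_end[OF g inc(1,2)] by blast
  obtain u2 where u2: "ends e2 = {v, u2}" using graph_other_end[OF g inc(3,4)] by blast
  obtain u3 where u3: "ends e3 = {v, u3}" using graph_other_end[OF g inc(5,6)] by blast
  have I': "{e\<in>E. v \<in> ends e} = {e1, e3, e2}" "{e\<in>E. v \<in> ends e} = {e2, e3, e1}"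
    using I(1) by auto
  consider "admissible_pair V E ends v u1 u2" | "admissible_pair V E ends v u1 u3"
    | "admissible_pair V E ends v u2 u3"
    using exists_admissible_pair[OF g sp v inc(1,3,5) I(2-4) u1 u2 u3] by blast
  then show ?thesis
  proof cases
    case 1
    show ?thesis by (rule that[OF I u1 u2 u3 1])
  next
    case 2
    show ?thesis by (rule that[OF I'(1) I(3,2) I(4)[symmetric] u1 u3 u2 2])
  next
    case 3
    show ?thesis by (rule that[OF I'(2) I(4) I(2)[symmetric] I(3)[symmetric] u2 u3 u1 3])
  qed
qed

theorem bispanning_if_sparse:
  "graph V E ends \<Longrightarrow> card E + 2 = 2 * card V \<Longrightarrow> sparse V E ends \<Longrightarrow> bispanning V E ends"
proof (induction "card V" arbitrary: V E ends rule: less_induct)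
  case less
  note g = less.prems(1) and t = less.prems(2) and sp = less.prems(3)
  have fin: "finite V" using g by (simp add: graph_def)
  obtain v where v: "v \<in> V" "degree E ends v \<le> 3" using exists_degree_le_3[OF g t] by blast
  have smaller: "card (V - {v}) < card V" using card_Diff1_less[OF fin v(1)] .
  show ?case
  proof (cases "card V = 1")
    case True
    then obtain r where "V = {r}" by (auto simp: card_1_singleton_iff)
    moreover have "E = {}" using t True g by (simp add: graph_def)
    ultimately show ?thesis using g bispanning_singleton[of r E ends] by simp
  next
    case False
    moreover have "card V \<noteq> 0" using fin v(1) by auto
    ultimately have "2 \<le> degree E ends v" by (intro degree_ge_2[OF g t sp v(1)]) linarith
    then consider "degree E ends v = 2" | "degree E ends v = 3" using v(2) by fastforce
    then show ?thesis
    proof cases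
      case 1
      then obtain e1 e2 where I: "{e\<in>E. v \<in> ends e} = {e1, e2}" "e1 \<noteq> e2"
        unfolding degree_def card_2_iff by blast
      show ?thesis
        using bispanning_deg2_lift[OF g v(1) I
            less.hyps[OF smaller deg2_reduction_counts[OF g t sp v(1) I]]] .
    next
      case 2
      obtain e1 e2 e3 u1 u2 u3
        where I: "{e\<in>E. v \<in> ends e} = {e1, e2, e3}" "e1 \<noteq> e2" "e1 \<noteq> e3" "e2 \<noteq> e3"
        and u: "ends e1 = {v, u1}" "ends e2 = {v, u2}" "ends e3 = {v, u3}"
        and adm: "admissible_pair V E ends v u1 u2"
        by (rule obtain_admissible_labelling[OF g sp v(1) 2])
      show ?thesis
        using bispanning_deg3_lift[OF g v(1) I u
            less.hyps[OF smaller deg3_reduction_counts[OF g t sp v(1) I u(1,2) adm]]] .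
    qed
  qed
qed

theorem bispanning_iff_sparse:
  "bispanning V E ends \<longleftrightarrow> graph V E ends \<and> card E + 2 = 2 * card V \<and> sparse V E ends"
proof
  assume b: "bispanning V E ends"
  then have "graph V E ends" by (simp add: bispanning_def)
  with bispanning_card[OF b] bispanning_sparse[OF b]
  show "graph V E ends \<and> card E + 2 = 2 * card V \<and> sparse V E ends" by simp
qed (use bispanning_if_sparse in blast)

section \<open>Atomic graphs\<close>

lemma atomic_strictly_sparse:
  assumes at: "atomic V E ends" and X: "X \<subseteq> V" "X \<noteq> V" "2 \<le> card X"
  shows "card (induced_edges E ends X) + 3 \<le> 2 * card X"
proof (rule ccontr)
  assume not_strict: "\<not> ?thesis"
  have b: "bispanning V E ends" using at by (simp add: atomic_def)
  then have g: "graph V E ends" and sp: "sparse V E ends"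
    using bispanning_iff_sparse by blast+
  have fin: "finite V" "finite E" using g by (auto simp: graph_def)
  have "X \<noteq> {}" using X(3) by auto
  then have "card (induced_edges E ends X) + 2 = 2 * card X"
    using sparseD[OF sp X(1)] not_strict by linarith
  \<comment> \<open>a tight proper subset would induce a proper bispanning subgraph\<close>
  moreover have "graph X (induced_edges E ends X) ends"
    using g X(1) fin(1) finite_subset unfolding graph_def induced_edges_def by fastforce
  moreover have "sparse X (induced_edges E ends X) ends"
    by (rule sparse_subgraph[OF sp fin(2) X(1)]) (simp add: induced_edges_def)
  ultimately have "bispanning X (induced_edges E ends X) ends"
    by (intro bispanning_if_sparse)
  moreover have "subgraph X (induced_edges E ends X) V E ends"
    using X(1) by (auto simp: subgraph_def induced_edges_def)
  ultimately have "X = V \<or> (\<exists>u. X = {u})" using at unfolding atomic_def by blast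
  then show False using X(2,3) by auto
qed

lemma atomic_no_parallel_edges:
  assumes at: "atomic V E ends" and "3 \<le> card E" and e: "e \<in> E" "f \<in> E" "e \<noteq> f"
  shows "ends e \<noteq> ends f"
proof
  assume parallel: "ends e = ends f"
  have b: "bispanning V E ends" using at by (simp add: atomic_def)
  then have g: "graph V E ends" by (simp add: bispanning_def)
  have X: "ends e \<subseteq> V" "card (ends e) = 2" using g e(1) by (auto simp: graph_def)
  have sub: "{e, f} \<subseteq> induced_edges E ends (ends e)"
    using e parallel by (auto simp: induced_edges_def)
  have "finite (induced_edges E ends (ends e))"
    using g by (simp add: graph_def induced_edges_def)
  then have two: "2 \<le> card (induced_edges E ends (ends e))"
    using card_mono[OF _ sub] e(3) by simp
  \<comment> \<open>two parallel edges form a bispanning subgraph on two vertices\<close>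
  have "ends e = V"
  proof (rule ccontr)
    assume "ends e \<noteq> V"
    then show False using atomic_strictly_sparse[OF at X(1) _ ] X(2) two by simp
  qed
  then show False using bispanning_card[OF b] X(2) assms(2) by simp
qed

lemma atomic_admissible_pair:
  assumes at: "atomic V E ends" and "v \<in> V" "a \<noteq> b"
  shows "admissible_pair V E ends v a b"
  unfolding admissible_pair_def
proof (intro conjI allI impI)
  fix Y assume Y: "Y \<subseteq> V - {v}" "a \<in> Y" "b \<in> Y"
  have "finite V" using at by (simp add: atomic_def bispanning_def graph_def)
  then have "card {a, b} \<le> card Y" using Y finite_subset[of Y V] by (intro card_mono) auto
  moreover have "Y \<subseteq> V" "Y \<noteq> V" using Y assms(2) by auto
  ultimately show "card (induced_edges E ends Y) + 3 \<le> 2 * card Y"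
    using atomic_strictly_sparse[OF at] assms(3) by simp
qed fact

lemma bispanning_reduction_graph:
  assumes g: "graph V E ends" and t: "card E + 2 = 2 * card V" and sp: "sparse V E ends"
    and v: "v \<in> V" and I: "{e\<in>E. v \<in> ends e} = {ex, ey, ez}" "ex \<noteq> ey" "ex \<noteq> ez" "ey \<noteq> ez"
    and ab: "a \<in> V - {v}" "b \<in> V - {v}" and adm: "admissible_pair V E ends v a b"
  shows "bispanning (V - {v}) (red_edges E ex ey ez) (red_ends ends a b)"
proof (rule bispanning_if_sparse)
  let ?D = "E - {ex, ey, ez}"
  have fin: "finite V" "finite E" using g by (auto simp: graph_def)
  have "a \<noteq> b" using adm by (simp add: admissible_pair_def)
  show "graph (V - {v}) (red_edges E ex ey ez) (red_ends ends a b)"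
  proof (rule graph_split_off[OF g ab \<open>a \<noteq> b\<close>])
    show "finite (red_edges E ex ey ez)" using fin by (simp add: red_edges_def)
    fix e assume "e \<in> red_edges E ex ey ez"
    then show "red_ends ends a b e = {a, b} \<or> (\<exists>f\<in>E. v \<notin> ends f \<and> red_ends ends a b e = ends f)"
      using I(1) by (auto simp: red_edges_def red_ends_def)
  qed
  have sub: "{ex, ey, ez} \<subseteq> E" using I(1) by blast
  then have "card ?D + 3 = card E"
    using I(2-4) card_Diff_subset[OF _ sub] card_mono[OF fin(2) sub] by simp
  moreover have "card (red_edges E ex ey ez) = card ?D + 1"
    using fin(2) by (simp add: red_edges_def card_image)
  ultimately show "card (red_edges E ex ey ez) + 2 = 2 * card (V - {v})"
    using t card_Suc_Diff1[OF fin(1) v] by simp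
  show "sparse (V - {v}) (red_edges E ex ey ez) (red_ends ends a b)"
  proof (rule sparse_split_off[OF sp adm])
    fix Y assume Y: "Y \<subseteq> V - {v}"
    let ?S = "induced_edges E ends Y"
    have sub: "induced_edges (red_edges E ex ey ez) (red_ends ends a b) Y
        \<subseteq> Some ` ?S \<union> (if a \<in> Y \<and> b \<in> Y then {None} else {})"
      by (auto simp: induced_edges_def red_edges_def red_ends_def)
    have "finite ?S" using fin by (simp add: induced_edges_def)
    then have "card (induced_edges (red_edges E ex ey ez) (red_ends ends a b) Y)
        \<le> card (Some ` ?S \<union> (if a \<in> Y \<and> b \<in> Y then {None} else {}))"
      by (intro card_mono[OF _ sub]) simp
    also have "\<dots> \<le> card ?S + (if a \<in> Y \<and> b \<in> Y then 1 else 0)"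
      using \<open>finite ?S\<close> by (simp add: card_insert_if card_image)
    finally show "card (induced_edges (red_edges E ex ey ez) (red_ends ends a b) Y)
        \<le> card ?S + (if a \<in> Y \<and> b \<in> Y then 1 else 0)" .
  qed
qed

theorem mainTheorem12:
  fixes V :: "'v set" and E :: "'e set" and ends :: "'e \<Rightarrow> 'v set"
    and v x y z :: 'v and ex ey ez :: 'e and a b :: 'v
  assumes "atomic V E ends"
    and "v \<in> V"
    and "ex \<in> E" "ey \<in> E" "ez \<in> E"
    and "ex \<noteq> ey" "ex \<noteq> ez" "ey \<noteq> ez"
    and "{e \<in> E. v \<in> ends e} = {ex, ey, ez}"
    and "ends ex = {v, x}" "ends ey = {v, y}" "ends ez = {v, z}"
    and "(a, b) \<in> {(x, y), (x, z), (y, z)}"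
  shows "bispanning (V - {v}) (red_edges E ex ey ez) (red_ends ends a b)"
proof -
  note at = assms(1) and v = assms(2) and inc = assms(3-5) and distinct = assms(6-8)
    and I = assms(9) and ends = assms(10-12)
  have b: "bispanning V E ends" using at by (simp add: atomic_def)
  then have g: "graph V E ends" and t: "card E + 2 = 2 * card V" and sp: "sparse V E ends"
    using bispanning_iff_sparse by blast+
  have "{ex, ey, ez} \<subseteq> E" using inc by blast
  then have three: "3 \<le> card E"
    using card_mono[of E "{ex, ey, ez}"] distinct g by (simp add: graph_def)
  have "ends ex \<noteq> ends ey" "ends ex \<noteq> ends ez" "ends ey \<noteq> ends ez"
    using atomic_no_parallel_edges[OF at three] inc distinct by simp_all
  then have "x \<noteq> y" "x \<noteq> z" "y \<noteq> z" using ends by auto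
  moreover have "x \<in> V - {v}" "y \<in> V - {v}" "z \<in> V - {v}"
    using graph_end_in[OF g] inc ends by simp_all
  ultimately have ab: "a \<in> V - {v}" "b \<in> V - {v}" "a \<noteq> b" using assms(13) by auto
  show ?thesis
    by (rule bispanning_reduction_graph[OF g t sp v I distinct ab(1,2) atomic_admissible_pair[OF at v ab(3)]])
qed

end
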